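(* Let $\lambda \in [0,1]$ and let $L$ be a PLD realization. Define $\phi_{\lambda}(l) \coloneqq \ln\!\left(1 + (e^{l}-1)/\lambda\right)$ and define two random variables $\varphi^{\mathrm{rem}}_{\lambda}(L)$ and $\varphi^{\mathrm{add}}_{\lambda}(L)$ through their probability mass functions: for every $l \in [-\infty,\infty]$, \[ f_{\varphi^{\mathrm{rem}}_{\lambda}(L)}(l) \coloneqq \lambda\, f_{L}\big(\phi_{\lambda}(l)\big) + (1-\lambda)\, f_{-\widetilde{L}}\big(\phi_{\lambda}(l)\big), \qquad f_{\varphi^{\mathrm{add}}_{\lambda}(L)}(l) \coloneqq f_{L}\big(-\phi_{\lambda}(-l)\big), \] where $\widetilde{L}$ is the PLD dual of $L$ and $f_{-\widetilde{L}}(x) = f_{\widetilde{L}}(-x)$. Then for any two discrete distributions $P, Q$ on a common domain, with $P_{\lambda} \coloneqq \lambda P + (1-\lambda) Q$, we have that $\mathcal{L}_{P_{\lambda}/Q}$ is distributed as $\varphi^{\mathrm{rem}}_{\lambda}(\mathcal{L}_{P/Q})$ and $\mathcal{L}_{Q/P_{\lambda}}$ is distributed as $\varphi^{\mathrm{add}}_{\lambda}(\mathcal{L}_{Q/P})$.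
   Context: Privacy loss random variable: for distributions $P,Q$ on a domain $\Omega$, $\mathcal{L}_{P/Q}$ is the random variable $\ln\big(P(\omega)/Q(\omega)\big)$ with $\omega \sim P$ (taking values in $[-\infty,\infty]$); its distribution is the privacy loss distribution (PLD). A discrete random variable $L$ on $[-\infty,\infty]$ with PMF $f_L$ is a PLD realization if $\mathbb{E}[e^{-L}] \le 1$ and $f_L(-\infty) = 0$. The PLD dual of a PLD realization $L$ is the random variable $\widetilde{L}$ with PMF $f_{\widetilde{L}}(l) = f_L(-l)\, e^{l}$ for finite $l$ and with an atom at $+\infty$ of mass $f_{\widetilde{L}}(\infty) \coloneqq 1 - \mathbb{E}[e^{-L}]$. *)

theory Defs
  imports "HOL-Probability.Probability"
begin

(* Pointwise log-likelihood ratio ln(p/q) in [-oo,oo]; the case p = 0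
   never occurs with positive probability when omega ~ P. *)
definition llr :: "real \<Rightarrow> real \<Rightarrow> ereal" where
  "llr p q = (if q = 0 then \<infinity> else if p = 0 then - \<infinity> else ereal (ln (p / q)))"

definition privacy_loss :: "'a pmf \<Rightarrow> 'a pmf \<Rightarrow> ereal pmf" where
  "privacy_loss P Q = map_pmf (\<lambda>\<omega>. llr (pmf P \<omega>) (pmf Q \<omega>)) P"

definition mixture :: "real \<Rightarrow> 'a pmf \<Rightarrow> 'a pmf \<Rightarrow> 'a pmf" where
  "mixture lam P Q = bind_pmf (bernoulli_pmf lam) (\<lambda>b. if b then P else Q)"

definition exp_neg :: "ereal \<Rightarrow> ennreal" where
  "exp_neg l = (if l = \<infinity> then 0 else if l = - \<infinity> then \<top> else ennreal (exp (- real_of_ereal l)))"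

definition exp_moment :: "ereal pmf \<Rightarrow> ennreal" where
  "exp_moment L = (\<integral>\<^sup>+ l. exp_neg l \<partial>measure_pmf L)"

definition pld_realization :: "ereal pmf \<Rightarrow> bool" where
  "pld_realization L \<longleftrightarrow> exp_moment L \<le> 1 \<and> pmf L (- \<infinity>) = 0"

definition dual_pmf :: "ereal pmf \<Rightarrow> ereal \<Rightarrow> real" where
  "dual_pmf L l = (if l = \<infinity> then 1 - enn2real (exp_moment L)
                   else if l = - \<infinity> then 0
                   else pmf L (- l) * exp (real_of_ereal l))"

definition neg_dual_pmf :: "ereal pmf \<Rightarrow> ereal \<Rightarrow> real" where
  "neg_dual_pmf L x = dual_pmf L (- x)"

definition phi_arg :: "real \<Rightarrow> ereal \<Rightarrow> ereal" where
  "phi_arg lam l = (if l = \<infinity> then \<infinity>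
                    else if l = - \<infinity> then ereal (1 - 1 / lam)
                    else ereal (1 + (exp (real_of_ereal l) - 1) / lam))"

definition phi :: "real \<Rightarrow> ereal \<Rightarrow> ereal option" where
  "phi lam l = (let a = phi_arg lam l in
                 if a < 0 then None
                 else if a = 0 then Some (- \<infinity>)
                 else if a = \<infinity> then Some \<infinity>
                 else Some (ereal (ln (real_of_ereal a))))"

definition phi_rem_pmf :: "real \<Rightarrow> ereal pmf \<Rightarrow> ereal \<Rightarrow> real" where
  "phi_rem_pmf lam L l = (case phi lam l of None \<Rightarrow> 0
                           | Some x \<Rightarrow> lam * pmf L x + (1 - lam) * neg_dual_pmf L x)"

definition phi_add_pmf :: "real \<Rightarrow> ereal pmf \<Rightarrow> ereal \<Rightarrow> real" where
  "phi_add_pmf lam L l = (case phi lam (- l) of None \<Rightarrow> 0 | Some x \<Rightarrow> pmf L (- x))"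

end

theory Submission
  imports Defs
begin

(* Pointwise, the privacy loss of a mixture against Q is a function of that of P against Q:
   llr (lam p + (1 - lam) q) q = ln (lam e^(llr p q) + 1 - lam), and phi lam is the inverse of
   this map, boundary values included.  So L_{P_lam/Q} is the image under that map of the law of
   llr p q under P_lam = lam P + (1 - lam) Q.  Its P-part is L; its Q-part is -L~, because
   passing from P to Q multiplies the mass at a finite l by e^(-l), while the Q-mass where p = 0
   is 1 - E[e^(-L)].  The second claim reduces to the first through llr q p = - llr p q,
   valid on the support of Q. *)

lemma measure_pmf_cong_support:
  assumes "\<And>x. x \<in> set_pmf M \<Longrightarrow> x \<in> A \<longleftrightarrow> x \<in> B"
  shows "measure M A = measure M B"
  using assms by (intro measure_eq_AE) (auto simp: AE_measure_pmf_iff)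

lemma measure_pmf_eq_cmult:
  assumes "\<And>x. x \<in> A \<Longrightarrow> pmf Q x = c * pmf P x"
  shows "measure Q A = c * measure P A"
  using assms by (simp add: measure_pmf_conv_infsetsum infsetsum_cmult_right pmf_abs_summable
                  cong: infsetsum_cong)

lemma llr_eq_ereal_iff:
  assumes "0 \<le> p" "0 \<le> q"
  shows "llr p q = ereal r \<longleftrightarrow> 0 < q \<and> p = exp r * q"
proof (cases "p = 0 \<or> q = 0")
  case True
  then show ?thesis using assms by (auto simp: llr_def)
next
  case False
  with assms have "0 < p" "0 < q" by auto
  then have "ln (p / q) = r \<longleftrightarrow> p / q = exp r"
    by (metis divide_pos_pos exp_ln ln_exp)
  with \<open>0 < p\<close> \<open>0 < q\<close> show ?thesis by (auto simp: llr_def field_simps)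
qed

lemma llr_eq_ln_iff:
  assumes "0 \<le> a" "0 \<le> p" "0 \<le> q"
  shows "llr p q = (if a = 0 then - \<infinity> else ereal (ln a)) \<longleftrightarrow> 0 < q \<and> p = a * q"
proof (cases "a = 0")
  case True
  then show ?thesis using assms by (auto simp: llr_def)
next
  case False
  with assms show ?thesis by (simp add: llr_eq_ereal_iff)
qed

lemma llr_swap:
  assumes "0 \<le> p" "0 \<le> q" "p \<noteq> 0 \<or> q \<noteq> 0"
  shows "llr q p = - llr p q"
  using assms by (auto simp: llr_def ln_div)

lemma phi_ereal:
  "phi lam (ereal r) = (let a = 1 + (exp r - 1) / lam in
     if a < 0 then None else Some (if a = 0 then - \<infinity> else ereal (ln a)))"
  by (simp add: phi_def phi_arg_def Let_def)

lemma llr_mixture_eq_iff: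
  assumes "0 < lam" "lam \<le> 1" "0 \<le> p" "0 \<le> q"
  shows "llr (lam * p + (1 - lam) * q) q = l \<longleftrightarrow> phi lam l = Some (llr p q)"
proof (cases l)
  case (real r)
  define a where "a = 1 + (exp r - 1) / lam"
  have "lam * p + (1 - lam) * q = exp r * q \<longleftrightarrow> p = a * q"
    using assms by (auto simp: a_def field_simps)
  then have "llr (lam * p + (1 - lam) * q) q = l \<longleftrightarrow> 0 < q \<and> p = a * q"
    using assms by (simp add: real llr_eq_ereal_iff)
  then show ?thesis
    using assms llr_eq_ln_iff[of a p q] mult_neg_pos[of a q]
    by (auto simp: real phi_ereal a_def[symmetric] Let_def)
next
  case PInf
  then show ?thesis by (simp add: phi_def phi_arg_def llr_def)
next
  case MInf
  show ?thesis
  proof (cases "lam = 1")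
    case True
    then show ?thesis by (simp add: MInf phi_def phi_arg_def llr_def)
  next
    case False
    with assms have "1 - 1 / lam < 0" by (simp add: field_simps)
    moreover from False assms have "lam * p + (1 - lam) * q = 0 \<Longrightarrow> q = 0"
      by (simp add: add_nonneg_eq_0_iff)
    ultimately show ?thesis by (auto simp: MInf phi_def phi_arg_def llr_def)
  qed
qed

lemma pmf_privacy_loss:
  "pmf (privacy_loss P Q) x = measure P {\<omega>. llr (pmf P \<omega>) (pmf Q \<omega>) = x}"
  by (simp add: privacy_loss_def pmf_map vimage_def)

lemma pmf_mixture:
  assumes "0 \<le> lam" "lam \<le> 1"
  shows "pmf (mixture lam P Q) x = lam * pmf P x + (1 - lam) * pmf Q x"
  using assms by (simp add: mixture_def pmf_bind)

lemma measure_mixture: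
  assumes "0 \<le> lam" "lam \<le> 1"
  shows "measure (mixture lam P Q) A = lam * measure P A + (1 - lam) * measure Q A"
  using assms
  by (simp add: measure_pmf_conv_infsetsum pmf_mixture infsetsum_add infsetsum_cmult_right
      pmf_abs_summable abs_summable_on_cmult_right)

lemma exp_moment_privacy_loss:
  "exp_moment (privacy_loss P Q) = emeasure Q {\<omega>. pmf P \<omega> \<noteq> 0}"
proof -
  have pointwise: "ennreal (pmf P \<omega>) * exp_neg (llr (pmf P \<omega>) (pmf Q \<omega>))
        = ennreal (pmf Q \<omega>) * indicator {\<omega>. pmf P \<omega> \<noteq> 0} \<omega>" for \<omega>
  proof (cases "pmf P \<omega> = 0 \<or> pmf Q \<omega> = 0")
    case True
    then show ?thesis by (auto simp: llr_def exp_neg_def)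
  next
    case False
    then have "0 < pmf P \<omega>" "0 < pmf Q \<omega>" by (simp_all add: order_less_le)
    then have "pmf P \<omega> * exp (- ln (pmf P \<omega> / pmf Q \<omega>)) = pmf Q \<omega>"
      by (simp add: exp_minus exp_ln field_simps)
    with False \<open>0 < pmf P \<omega>\<close> show ?thesis
      by (simp add: llr_def exp_neg_def ennreal_mult[symmetric])
  qed
  have "exp_moment (privacy_loss P Q) = (\<integral>\<^sup>+\<omega>. exp_neg (llr (pmf P \<omega>) (pmf Q \<omega>)) \<partial>P)"
    unfolding exp_moment_def privacy_loss_def by simp
  also have "\<dots> = (\<integral>\<^sup>+\<omega>. indicator {\<omega>. pmf P \<omega> \<noteq> 0} \<omega> \<partial>Q)"
    by (simp add: nn_integral_measure_pmf pointwise)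
  finally show ?thesis by simp
qed

lemma measure_llr_eq_neg_dual_pmf:
  fixes P Q :: "'a pmf"
  shows "measure Q {\<omega>. llr (pmf P \<omega>) (pmf Q \<omega>) = x} = neg_dual_pmf (privacy_loss P Q) x"
proof (cases x)
  case (real r)
  have "measure Q {\<omega>. llr (pmf P \<omega>) (pmf Q \<omega>) = x}
        = exp (- r) * measure P {\<omega>. llr (pmf P \<omega>) (pmf Q \<omega>) = x}"
    by (rule measure_pmf_eq_cmult) (simp add: real llr_eq_ereal_iff exp_minus)
  then show ?thesis by (simp add: real neg_dual_pmf_def dual_pmf_def pmf_privacy_loss)
next
  case PInf
  have "{\<omega>. llr (pmf P \<omega>) (pmf Q \<omega>) = x} \<inter> set_pmf Q = {}"
    by (auto simp: PInf llr_def set_pmf_iff)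
  then show ?thesis
    by (simp add: PInf neg_dual_pmf_def dual_pmf_def measure_pmf_zero_iff Int_commute)
next
  case MInf
  have "measure Q {\<omega>. llr (pmf P \<omega>) (pmf Q \<omega>) = x} = measure Q (UNIV - {\<omega>. pmf P \<omega> \<noteq> 0})"
    by (rule measure_pmf_cong_support) (auto simp: MInf llr_def set_pmf_iff)
  also have "\<dots> = 1 - enn2real (exp_moment (privacy_loss P Q))"
    using measure_pmf.prob_compl[of "{\<omega>. pmf P \<omega> \<noteq> 0}" Q]
    by (simp add: exp_moment_privacy_loss measure_pmf.emeasure_eq_measure)
  finally show ?thesis by (simp add: MInf neg_dual_pmf_def dual_pmf_def)
qed

lemma pmf_privacy_loss_mixture_left:
  assumes "0 < lam" "lam \<le> 1"
  shows "pmf (privacy_loss (mixture lam P Q) Q) l = phi_rem_pmf lam (privacy_loss P Q) l"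
proof -
  have "pmf (privacy_loss (mixture lam P Q) Q) l
        = measure (mixture lam P Q) {\<omega>. Some (llr (pmf P \<omega>) (pmf Q \<omega>)) = phi lam l}"
    using assms
    by (simp add: pmf_privacy_loss pmf_mixture llr_mixture_eq_iff eq_commute[of "phi lam l"])
  then show ?thesis
    using assms
    by (cases "phi lam l")
       (simp_all add: phi_rem_pmf_def measure_mixture pmf_privacy_loss
         measure_llr_eq_neg_dual_pmf)
qed

lemma pmf_privacy_loss_mixture_right:
  assumes "0 < lam" "lam \<le> 1"
  shows "pmf (privacy_loss Q (mixture lam P Q)) l = phi_add_pmf lam (privacy_loss Q P) l"
proof -
  have "llr (pmf Q \<omega>) (lam * pmf P \<omega> + (1 - lam) * pmf Q \<omega>) = l
        \<longleftrightarrow> Some (- llr (pmf Q \<omega>) (pmf P \<omega>)) = phi lam (- l)"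
    if "\<omega> \<in> set_pmf Q" for \<omega>
  proof -
    define p q where "p = pmf P \<omega>" and "q = pmf Q \<omega>"
    have "0 \<le> p" "0 \<le> q" "q \<noteq> 0"
      using that by (simp_all add: p_def q_def set_pmf_iff)
    moreover from this assms have "0 \<le> lam * p + (1 - lam) * q" by simp
    ultimately have "llr q (lam * p + (1 - lam) * q) = - llr (lam * p + (1 - lam) * q) q"
      and "llr p q = - llr q p"
      by (simp_all add: llr_swap[of q])
    with assms \<open>0 \<le> p\<close> \<open>0 \<le> q\<close> show ?thesis
      unfolding p_def[symmetric] q_def[symmetric]
      by (simp add: llr_mixture_eq_iff ereal_uminus_eq_reorder eq_commute[of "phi lam (- l)"])
  qed
  then have "pmf (privacy_loss Q (mixture lam P Q)) l
             = measure Q {\<omega>. Some (- llr (pmf Q \<omega>) (pmf P \<omega>)) = phi lam (- l)}"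
    unfolding pmf_privacy_loss pmf_mixture[OF less_imp_le[OF assms(1)] assms(2)]
    by (intro measure_pmf_cong_support) simp
  then show ?thesis
    by (cases "phi lam (- l)")
       (simp_all add: phi_add_pmf_def pmf_privacy_loss ereal_uminus_eq_reorder)
qed

theorem mainTheorem1:
  fixes P Q :: "'a pmf" and lam :: real
  assumes "0 < lam" and "lam \<le> 1"
  shows "(\<forall>l. pmf (privacy_loss (mixture lam P Q) Q) l = phi_rem_pmf lam (privacy_loss P Q) l)
       \<and> (\<forall>l. pmf (privacy_loss Q (mixture lam P Q)) l = phi_add_pmf lam (privacy_loss Q P) l)"
  using pmf_privacy_loss_mixture_left[OF assms] pmf_privacy_loss_mixture_right[OF assms] by blast

end
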